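(* Let $X(\mathcal{M})$ be the $SL_2(\mathbb{C})$ character variety of $\mathcal{M}$. There is exactly one irreducible component $X_0(\mathcal{M})$ of $X(\mathcal{M})$ containing the character of an irreducible representation. On $X_0(\mathcal{M})$ the functions $s=\operatorname{tr}\rho(\lambda)$ and $t=\operatorname{tr}\rho(\beta)$ are complete coordinates, identifying $X_0(\mathcal{M})$ with the curve in $\mathbb{C}^2$ cut out by $$(-2-3s+s^3)t^4+(4+4s-s^2-s^3)t^2-1=0,\quad\text{equivalently}\quad (s-2)(s+1)^2t^4-(s-2)(s+2)(s+1)t^2-1=0,$$ and this polynomial is irreducible in $\mathbb{C}[s,t]$. Moreover, on $X_0(\mathcal{M})$, $w:=\operatorname{tr}\rho(\lambda\beta)=\operatorname{tr}\rho((\lambda\beta)^{-1})$ satisfies $w=t-\frac{1}{t(s+1)}$.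
   Context: $\mathcal{M}$ is the SnapPy census manifold $m137$ with $\pi_1(\mathcal{M})=\langle \lambda,\beta \mid \beta^{-1}\lambda^{-1}\beta^{-1}\lambda^{-1}\beta^{2}\lambda=\lambda\beta^{-2}\lambda^{-1}\beta^{2}\rangle$, where $\lambda$ is the homological longitude. The $SL_2(\mathbb{C})$ character variety $X(\mathcal{M})$ is the GIT quotient $\operatorname{Hom}(\pi_1(\mathcal{M}),SL_2(\mathbb{C}))/\!/SL_2(\mathbb{C})$, an affine variety whose points are characters $[\rho]$ of representations $\rho$. A representation $\rho$ into $SL_2(\mathbb{C})$ is irreducible if no line in $\mathbb{C}^2$ is invariant under its image (equivalently, it is not conjugate into upper triangular matrices). *)

theory Defs
  imports "HOL-Computational_Algebra.Polynomial_Factorial"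
begin

text \<open>A 2x2 complex matrix [[a,b],[c,d]] is represented by the tuple (a,b,c,d).\<close>
type_synonym m2 = "complex \<times> complex \<times> complex \<times> complex"

definition m2mul :: "m2 \<Rightarrow> m2 \<Rightarrow> m2" where
  "m2mul M N = (case M of (a,b,c,d) \<Rightarrow> case N of (e,f,g,h) \<Rightarrow>
      (a*e + b*g, a*f + b*h, c*e + d*g, c*f + d*h))"

definition m2id :: m2 where "m2id = (1,0,0,1)"

definition m2det :: "m2 \<Rightarrow> complex" where
  "m2det M = (case M of (a,b,c,d) \<Rightarrow> a*d - b*c)"

definition m2tr :: "m2 \<Rightarrow> complex" where
  "m2tr M = (case M of (a,b,c,d) \<Rightarrow> a + d)"

definition m2inv :: "m2 \<Rightarrow> m2" where
  "m2inv M = (case M of (a,b,c,d) \<Rightarrow>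
     (d / m2det M, - b / m2det M, - c / m2det M, a / m2det M))"

definition m2app :: "m2 \<Rightarrow> complex \<times> complex \<Rightarrow> complex \<times> complex" where
  "m2app M v = (case M of (a,b,c,d) \<Rightarrow> case v of (x,y) \<Rightarrow> (a*x + b*y, c*x + d*y))"

definition m2prod :: "m2 list \<Rightarrow> m2" where
  "m2prod xs = foldr m2mul xs m2id"

text \<open>A representation rho is determined by L = rho(lambda), B = rho(beta) in SL_2(C)
  satisfying the defining relation
  beta^-1 lambda^-1 beta^-1 lambda^-1 beta^2 lambda = lambda beta^-2 lambda^-1 beta^2.\<close>
definition is_rep :: "m2 \<Rightarrow> m2 \<Rightarrow> bool" where
  "is_rep L B \<longleftrightarrow> m2det L = 1 \<and> m2det B = 1 \<and>
     m2prod [m2inv B, m2inv L, m2inv B, m2inv L, B, B, L]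
       = m2prod [L, m2inv B, m2inv B, m2inv L, B, B]"

inductive_set rep_image :: "m2 \<Rightarrow> m2 \<Rightarrow> m2 set" for L B where
  ri_id: "m2id \<in> rep_image L B"
| ri_L: "L \<in> rep_image L B"
| ri_B: "B \<in> rep_image L B"
| ri_mul: "M \<in> rep_image L B \<Longrightarrow> N \<in> rep_image L B \<Longrightarrow> m2mul M N \<in> rep_image L B"
| ri_inv: "M \<in> rep_image L B \<Longrightarrow> m2inv M \<in> rep_image L B"

definition irred_rep :: "m2 \<Rightarrow> m2 \<Rightarrow> bool" where
  "irred_rep L B \<longleftrightarrow> \<not> (\<exists>v. v \<noteq> (0,0) \<and>
     (\<forall>M \<in> rep_image L B. \<exists>c. m2app M v = (c * fst v, c * snd v)))"

definition char :: "m2 \<Rightarrow> m2 \<Rightarrow> complex \<times> complex \<times> complex" where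
  "char L B = (m2tr L, m2tr B, m2tr (m2mul L B))"

definition charvar :: "(complex \<times> complex \<times> complex) set" where
  "charvar = {char L B | L B. is_rep L B}"

inductive pf3 :: "(complex \<times> complex \<times> complex \<Rightarrow> complex) \<Rightarrow> bool" where
  pf3_const: "pf3 (\<lambda>_. c)"
| pf3_x: "pf3 (\<lambda>(x,y,z). x)"
| pf3_y: "pf3 (\<lambda>(x,y,z). y)"
| pf3_z: "pf3 (\<lambda>(x,y,z). z)"
| pf3_add: "pf3 f \<Longrightarrow> pf3 g \<Longrightarrow> pf3 (\<lambda>p. f p + g p)"
| pf3_mul: "pf3 f \<Longrightarrow> pf3 g \<Longrightarrow> pf3 (\<lambda>p. f p * g p)"

definition zclosed3 :: "(complex \<times> complex \<times> complex) set \<Rightarrow> bool" where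
  "zclosed3 S \<longleftrightarrow> (\<exists>F. (\<forall>f\<in>F. pf3 f) \<and> S = {p. \<forall>f\<in>F. f p = 0})"

definition zirr3 :: "(complex \<times> complex \<times> complex) set \<Rightarrow> bool" where
  "zirr3 S \<longleftrightarrow> S \<noteq> {} \<and> zclosed3 S \<and>
     (\<forall>A B. zclosed3 A \<longrightarrow> zclosed3 B \<longrightarrow> S \<subseteq> A \<union> B \<longrightarrow> S \<subseteq> A \<or> S \<subseteq> B)"

definition irr_comp3 :: "(complex \<times> complex \<times> complex) set \<Rightarrow> (complex \<times> complex \<times> complex) set \<Rightarrow> bool" where
  "irr_comp3 X Y \<longleftrightarrow> Y \<subseteq> X \<and> zirr3 Y \<and> (\<forall>Z. Z \<subseteq> X \<longrightarrow> zirr3 Z \<longrightarrow> Y \<subseteq> Z \<longrightarrow> Z = Y)"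

text \<open>Bivariate polynomials: outer variable t, coefficients in C[s].\<close>
definition m137_poly :: "complex poly poly" where
  "m137_poly = [: [:-1:], 0, [:4, 4, -1, -1:], 0, [:-2, -3, 0, 1:] :]"

definition m137_poly_alt :: "complex poly poly" where
  "m137_poly_alt = (let S = [:[:0, 1:]:]; T = [:0, 1:] in
     (S - 2) * (S + 1)^2 * T^4 - (S - 2) * (S + 2) * (S + 1) * T^2 - 1)"

definition peval2 :: "complex poly poly \<Rightarrow> complex \<Rightarrow> complex \<Rightarrow> complex" where
  "peval2 P s t = poly (map_poly (\<lambda>c. poly c s) P) t"

end

theory Submission
  imports Defs "HOL-Computational_Algebra.Field_as_Ring"
begin

(* Write s, t, w for the traces of L, B, LB, and W = V for the defining relation. The four
   identities tr(W X) = tr(V X), X = 1, L, B, LB, are polynomial in s, t, w and force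
   w = t - t(s - 2)((s + 1)t^2 - (s + 2)) and (s - 2) P(s, t) = 0. So the character variety is
   the union of the line {s = 2, w = t}, all of whose characters are reducible, and the graph
   of this function over the curve P = 0; both pieces are realised by explicit matrices.
   On a common eigenvector of a reducible representation the relation forces the eigenvalue
   of L to be 1, hence s = 2, which never happens on P = 0 since P(2, t) = -1.
   The graph is Zariski irreducible because P is irreducible (comparing coefficients in t,
   any factorisation would give the t^4 coefficient (s - 2)(s + 1)^2 a double root at s = 2)
   and every polynomial vanishing on P = 0 is a multiple of P (pseudo-division by P leaves a
   cubic in t vanishing at the four distinct roots of the biquadratic P(s, -) for generic s). *)

lemma peval2_eq_poly_poly: "peval2 P s t = poly (poly P [:t:]) s"
  unfolding peval2_def by (induct P) (auto simp: map_poly_pCons)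

lemma peval2_add [simp]: "peval2 (p + q) s t = peval2 p s t + peval2 q s t"
  by (simp add: peval2_eq_poly_poly)

lemma peval2_diff [simp]: "peval2 (p - q) s t = peval2 p s t - peval2 q s t"
  by (simp add: peval2_eq_poly_poly)

lemma peval2_mult [simp]: "peval2 (p * q) s t = peval2 p s t * peval2 q s t"
  by (simp add: peval2_eq_poly_poly)

lemma peval2_smult [simp]: "peval2 (smult a p) s t = poly a s * peval2 p s t"
  by (simp add: peval2_eq_poly_poly)

lemma peval2_0 [simp]: "peval2 0 s t = 0"
  by (simp add: peval2_def)

lemma peval2_pCons [simp]: "peval2 (pCons a Q) s t = poly a s + t * peval2 Q s t"
  by (simp add: peval2_eq_poly_poly)

lemma peval2_as_sum:
  assumes "degree P \<le> n"
  shows "peval2 P s t = (\<Sum>i\<le>n. poly (coeff P i) s * t ^ i)"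
proof -
  have "peval2 P s t = peval2 (\<Sum>i\<le>n. monom (coeff P i) i) s t"
    by (simp only: poly_as_sum_of_monoms'[OF assms])
  also have "\<dots> = (\<Sum>i\<le>n. poly (coeff P i) s * t ^ i)"
    by (simp add: peval2_eq_poly_poly poly_sum poly_monom)
  finally show ?thesis .
qed

section \<open>Irreducibility of the curve polynomial\<close>

definition m137_eval :: "complex \<Rightarrow> complex \<Rightarrow> complex" where
  "m137_eval s t = (s - 2) * (s + 1)^2 * t^4 - (s - 2) * (s + 2) * (s + 1) * t^2 - 1"

lemma peval2_m137_poly: "peval2 m137_poly s t = m137_eval s t"
  unfolding peval2_eq_poly_poly m137_poly_def m137_eval_def
  by (simp add: algebra_simps power2_eq_square power4_eq_xxxx)

lemma m137_poly_eq_alt: "m137_poly = m137_poly_alt"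
proof -
  have S: "[:[:0, 1:]:] - (2::complex poly poly) = [:[:-2, 1:]:]"
          "[:[:0, 1:]:] + (1::complex poly poly) = [:[:1, 1:]:]"
          "[:[:0, 1:]:] + (2::complex poly poly) = [:[:2, 1:]:]"
    by (simp_all add: numeral_poly one_pCons)
  have T: "[:0, 1:]^2 = ([:0, 0, 1:] :: complex poly poly)"
          "[:0, 1:]^4 = ([:0, 0, 0, 0, 1:] :: complex poly poly)"
    by (simp_all add: power2_eq_square power4_eq_xxxx one_pCons)
  show ?thesis
    unfolding m137_poly_def m137_poly_alt_def Let_def S T
    by (simp add: power2_eq_square one_pCons)
qed

abbreviation m137_A :: "complex poly" where "m137_A \<equiv> [:-2, -3, 0, 1:]"

abbreviation m137_C :: "complex poly" where "m137_C \<equiv> [:4, 4, -1, -1:]"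

lemma m137_poly_coeffs:
  "coeff m137_poly 0 = -1" "coeff m137_poly 1 = 0" "coeff m137_poly 2 = m137_C"
  "coeff m137_poly 3 = 0" "coeff m137_poly 4 = m137_A" "degree m137_poly = 4"
  by (simp_all add: m137_poly_def numeral_eq_Suc one_pCons)

lemma m137_poly_nonzero: "m137_poly \<noteq> 0"
  using m137_poly_coeffs(6) by auto

lemma m137_factor_degrees:
  assumes "m137_poly = F * G"
  shows "degree F + degree G = 4"
  using assms m137_poly_nonzero degree_mult_eq m137_poly_coeffs(6)
  by (metis mult_zero_left mult_zero_right)

lemma m137_factor_coeffs:
  assumes "m137_poly = F * G"
  defines "f \<equiv> coeff F" and "g \<equiv> coeff G"
  shows "f 0 * g 0 = -1" "f 0 * g 1 + f 1 * g 0 = 0"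
    "f 0 * g 2 + f 1 * g 1 + f 2 * g 0 = m137_C"
    "f 0 * g 3 + f 1 * g 2 + f 2 * g 1 + f 3 * g 0 = 0"
    "f 0 * g 4 + f 1 * g 3 + f 2 * g 2 + f 3 * g 1 + f 4 * g 0 = m137_A"
proof -
  have e: "coeff m137_poly n = (\<Sum>i\<le>n. f i * g (n - i))" for n
    unfolding assms(1) f_def g_def by (rule coeff_mult)
  show "f 0 * g 0 = -1"
    using e[of 0] m137_poly_coeffs by simp
  show "f 0 * g 1 + f 1 * g 0 = 0"
    using e[of 1] m137_poly_coeffs by (simp add: numeral_eq_Suc)
  show "f 0 * g 2 + f 1 * g 1 + f 2 * g 0 = m137_C"
    using e[of 2] m137_poly_coeffs by (simp add: numeral_eq_Suc)
  show "f 0 * g 3 + f 1 * g 2 + f 2 * g 1 + f 3 * g 0 = 0"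
    using e[of 3] m137_poly_coeffs by (simp add: numeral_eq_Suc)
  show "f 0 * g 4 + f 1 * g 3 + f 2 * g 2 + f 3 * g 1 + f 4 * g 0 = m137_A"
    using e[of 4] m137_poly_coeffs by (simp add: numeral_eq_Suc)
qed

lemma square_factor_nonzero_at_simple_root:
  fixes E h Z :: "'a::idom poly"
  assumes "poly E a \<noteq> 0" and "[:-a, 1:] * E = h^2 * Z"
  shows "poly h a \<noteq> 0"
proof
  assume "poly h a = 0"
  then have "[:-a, 1:] dvd h" by (simp add: poly_eq_0_iff_dvd)
  then obtain k where k: "h = [:-a, 1:] * k" by (rule dvdE)
  define q where "q = [:-a, 1:]"
  have "q * E = q * (q * k^2 * Z)"
    using assms(2) unfolding k q_def[symmetric] by (simp add: algebra_simps power2_eq_square)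
  moreover have "q \<noteq> 0" by (simp add: q_def)
  ultimately have "E = q * k^2 * Z" by simp
  with assms(1) show False by (simp add: q_def)
qed

lemma m137_poly_no_linear_factor:
  assumes PFG: "m137_poly = F * G"
  shows "degree F \<noteq> 1"
proof
  assume dF: "degree F = 1"
  define f g where "f = coeff F" and "g = coeff G"
  have "degree G = 3" using m137_factor_degrees[OF PFG] dF by simp
  then have [simp]: "f 2 = 0" "f 3 = 0" "f 4 = 0" "g 4 = 0"
    using dF by (simp_all add: f_def g_def coeff_eq_0)
  note e = m137_factor_coeffs[OF PFG, folded f_def g_def]
  define m where "m = f 1 * g 0"
  have key: "m137_A = m^2 * (m^2 - m137_C)"
    using e unfolding m_def by simp algebra
  have "poly m 2 ^ 4 = 0"
    using arg_cong[OF key, of "\<lambda>p. poly p 2"] by (simp add: power2_eq_square power4_eq_xxxx)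
  then have "poly m 2 = 0" by simp
  moreover have "poly m 2 \<noteq> 0"
    by (rule square_factor_nonzero_at_simple_root[where E = "[:1, 2, 1:]" and Z = "m^2 - m137_C"])
      (simp_all add: key[symmetric])
  ultimately show False by contradiction
qed

lemma m137_poly_no_quadratic_factor:
  assumes PFG: "m137_poly = F * G"
  shows "degree F \<noteq> 2"
proof
  assume dF: "degree F = 2"
  define f g where "f = coeff F" and "g = coeff G"
  have "degree G = 2" using m137_factor_degrees[OF PFG] dF by simp
  then have [simp]: "f 3 = 0" "f 4 = 0" "g 3 = 0" "g 4 = 0"
    using dF by (simp_all add: f_def g_def coeff_eq_0)
  note e = m137_factor_coeffs[OF PFG, folded f_def g_def]
  show False
  proof (cases "f 1 = 0")
    case True
    define h where "h = f 2 * g 0 - f 0 * g 2"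
    have discr: "C^2 + 4 * A = (f2 * g0 - f0 * g2)^2"
      if "f0 * g0 = -1" "f0 * g2 + f2 * g0 = C" "f2 * g2 = A" for A C f0 f2 g0 g2 :: "complex poly"
      using that by algebra
    have key: "m137_C^2 + 4 * m137_A = h^2"
      unfolding h_def by (rule discr) (use e True in simp_all)
    have "poly h 2 ^ 2 = 0"
      using arg_cong[OF key, of "\<lambda>p. poly p 2"] by (simp add: power2_eq_square)
    then have "poly h 2 = 0" by simp
    moreover have "poly h 2 \<noteq> 0"
    proof (rule square_factor_nonzero_at_simple_root)
      have "[:-2, 1:] * ([:1, 2, 1:] * [:-4, -4, 2, 1:]) = m137_C^2 + 4 * m137_A"
        by (simp add: power2_eq_square numeral_poly)
      also note key
      finally show "[:-2, 1:] * ([:1, 2, 1:] * [:-4, -4, 2, 1:]) = h^2 * 1" by simp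
    qed simp
    ultimately show False by contradiction
  next
    case False
    have g1: "g 1 = f 1 * g 0 ^ 2" using e(1,2) by algebra
    have "f 1 * (g 2 + f 2 * g 0 ^ 2) = 0"
      using e(4) g1 by (simp add: algebra_simps power2_eq_square)
    then have "g 2 = - f 2 * g 0 ^ 2" using False by (simp add: eq_neg_iff_add_eq_0)
    then have key: "m137_A = (f 2 * g 0)^2 * (-1)"
      using e(5) by (simp add: algebra_simps power2_eq_square)
    have "poly (f 2 * g 0) 2 ^ 2 = 0"
      using arg_cong[OF key, of "\<lambda>p. poly p 2"] by (simp add: power2_eq_square)
    then have "poly (f 2 * g 0) 2 = 0" by simp
    moreover have "poly (f 2 * g 0) 2 \<noteq> 0"
      by (rule square_factor_nonzero_at_simple_root[where E = "[:1, 2, 1:]" and Z = "-1"])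
        (use key in simp_all)
    ultimately show False by contradiction
  qed
qed

lemma irreducible_m137_poly: "irreducible m137_poly"
proof (rule irreducibleI)
  show "m137_poly \<noteq> 0" by (rule m137_poly_nonzero)
  show "\<not> is_unit m137_poly"
  proof
    assume "is_unit m137_poly"
    then obtain c where "m137_poly = [:c:]" by (rule is_unit_polyE)
    then show False using m137_poly_coeffs(6) by (metis degree_pCons_0 zero_neq_numeral)
  qed
next
  have unit_if_constant: "is_unit F" if PFG: "m137_poly = F * G" and "degree F = 0" for F G
  proof -
    have "coeff F 0 * - coeff G 0 = 1" using m137_factor_coeffs(1)[OF PFG] by simp
    then have "is_unit (coeff F 0)" by (metis dvdI)
    then show ?thesis
      using \<open>degree F = 0\<close> by (metis degree_eq_zeroE coeff_pCons_0 is_unit_const_poly_iff)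
  qed
  fix F G assume PFG: "m137_poly = F * G"
  then have GF: "m137_poly = G * F" by (simp add: mult.commute)
  have "degree F \<noteq> 1" "degree G \<noteq> 1" "degree F \<noteq> 2"
    using m137_poly_no_linear_factor[OF PFG] m137_poly_no_linear_factor[OF GF]
      m137_poly_no_quadratic_factor[OF PFG] by simp_all
  then have "degree F = 0 \<or> degree G = 0" using m137_factor_degrees[OF PFG] by linarith
  then show "is_unit F \<or> is_unit G" using unit_if_constant PFG GF by blast
qed

section \<open>Polynomials vanishing on the curve\<close>

lemma poly_eq_0_if_roots_cofinite:
  fixes p :: "'a::{idom, ring_char_0} poly"
  assumes "finite B" and "\<And>x. x \<notin> B \<Longrightarrow> poly p x = 0"
  shows "p = 0"
proof (rule ccontr)
  assume "p \<noteq> 0"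
  then have "finite (B \<union> {x. poly p x = 0})" using assms(1) poly_roots_finite by blast
  moreover have "B \<union> {x. poly p x = 0} = UNIV" using assms(2) by blast
  ultimately show False by (simp add: infinite_UNIV_char_0)
qed

lemma cubic_vanishing_at_biquadratic_roots:
  fixes A C c0 c1 c2 c3 :: complex
  assumes A: "A \<noteq> 0" and discr: "C^2 + 4 * A \<noteq> 0"
    and vanish: "\<And>t. A * t^4 + C * t^2 - 1 = 0 \<Longrightarrow> c0 + c1 * t + c2 * t^2 + c3 * t^3 = 0"
  shows "c0 = 0 \<and> c1 = 0 \<and> c2 = 0 \<and> c3 = 0"
proof -
  have even_odd: "c0 + c2 * u = 0 \<and> c1 + c3 * u = 0" if u: "A * u^2 + C * u - 1 = 0" for u
  proof -
    define t where "t = csqrt u"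
    have tt: "t^2 = u" unfolding t_def by simp
    then have "t \<noteq> 0" using u by auto
    have "A * t^4 + C * t^2 - 1 = 0" "A * (-t)^4 + C * (-t)^2 - 1 = 0" using u tt by algebra+
    then have "c0 + c1 * t + c2 * t^2 + c3 * t^3 = 0" "c0 - c1 * t + c2 * t^2 - c3 * t^3 = 0"
      using vanish by fastforce+
    then have "t * (c1 + c3 * u) = 0" "c0 + c2 * u = 0" using tt by algebra+
    with \<open>t \<noteq> 0\<close> show ?thesis by simp
  qed
  define d where "d = csqrt (C^2 + 4 * A)"
  have dd: "d^2 = C^2 + 4 * A" unfolding d_def by simp
  define u1 u2 where "u1 = (- C + d) / (2 * A)" and "u2 = (- C - d) / (2 * A)"
  have "2 * A * u1 = - C + d" "2 * A * u2 = - C - d" unfolding u1_def u2_def using A by simp_all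
  then have "4 * A * (A * u1^2 + C * u1 - 1) = 0" "4 * A * (A * u2^2 + C * u2 - 1) = 0"
    and "2 * A * (u1 - u2) = 2 * d" using dd by algebra+
  then have roots: "A * u1^2 + C * u1 - 1 = 0" "A * u2^2 + C * u2 - 1 = 0" and "u1 \<noteq> u2"
    using A discr dd by auto
  from even_odd[OF roots(1)] even_odd[OF roots(2)]
  have "c2 * (u1 - u2) = 0" "c3 * (u1 - u2) = 0" by algebra+
  with \<open>u1 \<noteq> u2\<close> even_odd[OF roots(1)] show ?thesis by simp
qed

lemma m137_eval_biquadratic:
  "m137_eval s t = poly m137_A s * t^4 + poly m137_C s * t^2 - 1"
  unfolding m137_eval_def by (simp add: algebra_simps power2_eq_square power3_eq_cube)

lemma m137_biquadratic_degenerate_finite: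
  "finite {s. poly m137_A s = 0 \<or> (poly m137_C s)^2 + 4 * poly m137_A s = 0}"
proof -
  define D where "D = m137_C^2 + 4 * m137_A"
  have poly_D: "poly D s = (poly m137_C s)^2 + 4 * poly m137_A s" for s
    unfolding D_def by (simp only: poly_add poly_power poly_mult poly_numeral)
  have "finite {s. poly m137_A s = 0}" by (intro poly_roots_finite) simp
  moreover have "poly D 0 \<noteq> 0" by (simp add: D_def power2_eq_square)
  then have "finite {s. poly D s = 0}" by (intro poly_roots_finite) auto
  ultimately show ?thesis unfolding poly_D[symmetric] Collect_disj_eq by (rule finite_UnI)
qed

lemma m137_vanishing_cubic_eq_0:
  fixes r :: "complex poly poly"
  assumes deg: "degree r \<le> 3" and vanish: "\<And>s t. m137_eval s t = 0 \<Longrightarrow> peval2 r s t = 0"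
  shows "r = 0"
proof -
  define Bad where "Bad = {s. poly m137_A s = 0 \<or> (poly m137_C s)^2 + 4 * poly m137_A s = 0}"
  have "finite Bad" unfolding Bad_def by (rule m137_biquadratic_degenerate_finite)
  have coeffs_vanish: "poly (coeff r i) s = 0" if "s \<notin> Bad" "i \<le> 3" for s i
  proof -
    have "poly (coeff r 0) s = 0 \<and> poly (coeff r 1) s = 0 \<and>
          poly (coeff r 2) s = 0 \<and> poly (coeff r 3) s = 0"
    proof (rule cubic_vanishing_at_biquadratic_roots)
      show "poly m137_A s \<noteq> 0" "(poly m137_C s)^2 + 4 * poly m137_A s \<noteq> 0"
        using that(1) unfolding Bad_def by auto
      fix t assume "poly m137_A s * t^4 + poly m137_C s * t^2 - 1 = 0"
      then have "peval2 r s t = 0" using vanish by (simp add: m137_eval_biquadratic)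
      then show "poly (coeff r 0) s + poly (coeff r 1) s * t + poly (coeff r 2) s * t^2
          + poly (coeff r 3) s * t^3 = 0"
        by (simp add: peval2_as_sum[OF deg] numeral_eq_Suc)
    qed
    with that(2) show ?thesis by (auto simp: le_Suc_eq numeral_eq_Suc)
  qed
  show "r = 0"
  proof (rule poly_eqI)
    fix i
    show "coeff r i = coeff 0 i"
    proof (cases "i \<le> 3")
      case True
      then show ?thesis using poly_eq_0_if_roots_cofinite[OF \<open>finite Bad\<close>] coeffs_vanish by simp
    next
      case False
      then show ?thesis using deg by (simp add: coeff_eq_0)
    qed
  qed
qed

lemma m137_poly_dvd_if_vanishing:
  assumes vanish: "\<And>s t. peval2 m137_poly s t = 0 \<Longrightarrow> peval2 h s t = 0"
  shows "m137_poly dvd h"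
proof -
  define r where "r = pseudo_mod h m137_poly"
  obtain a q where "a \<noteq> 0" and div: "smult a h = m137_poly * q + r"
    using pseudo_mod(1)[OF m137_poly_nonzero] unfolding r_def by blast
  have "r = 0 \<or> degree r < 4"
    using pseudo_mod(2)[OF m137_poly_nonzero] m137_poly_coeffs(6) unfolding r_def by simp
  moreover have "m137_eval s t = 0 \<Longrightarrow> peval2 r s t = 0" for s t
    using vanish arg_cong[OF div, of "\<lambda>p. peval2 p s t"] by (simp add: peval2_m137_poly)
  ultimately have "r = 0" using m137_vanishing_cubic_eq_0 by fastforce
  then have "m137_poly dvd [:a:] * h" using div by simp
  moreover have "\<not> m137_poly dvd [:a:]"
    using dvd_imp_degree_le[of m137_poly "[:a:]"] \<open>a \<noteq> 0\<close> m137_poly_coeffs(6) by auto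
  ultimately show ?thesis
    using irreducible_m137_poly prime_elem_iff_irreducible prime_elem_dvd_mult_iff by blast
qed

section \<open>Graphs of polynomial functions over plane curves\<close>

lemma pf3_fst: "pf3 fst"
proof -
  have "(\<lambda>(x::complex, y::complex, z::complex). x) = fst" by auto
  with pf3_x show ?thesis by simp
qed

lemma pf3_fst_snd: "pf3 (\<lambda>p. fst (snd p))"
  using pf3_y by (simp add: case_prod_beta')

lemma pf3_snd_snd: "pf3 (\<lambda>p. snd (snd p))"
  using pf3_z by (simp add: case_prod_beta')

lemma pf3_diff: "pf3 f \<Longrightarrow> pf3 g \<Longrightarrow> pf3 (\<lambda>p. f p - g p)"
  using pf3_add[OF _ pf3_mul[OF pf3_const[of "-1"]], of f g] by simp

lemma pf3_poly_fst: "pf3 (\<lambda>p. poly a (fst p))"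
  by (induct a) (simp_all add: pf3_const pf3_add pf3_mul pf3_fst)

lemma pf3_peval2: "pf3 (\<lambda>p. peval2 Q (fst p) (fst (snd p)))"
  by (induct Q) (simp_all add: pf3_const pf3_poly_fst pf3_add pf3_mul pf3_fst_snd)

lemma pf3_on_poly_graph:
  assumes "pf3 f" and w: "\<And>s t. w s t = peval2 W s t"
  shows "\<exists>Q. \<forall>s t. f (s, t, w s t) = peval2 Q s t"
  using assms(1)
proof (induct rule: pf3.induct)
  case (pf3_const c)
  show ?case by (rule exI[of _ "[:[:c:]:]"]) simp
next
  case pf3_x
  show ?case by (rule exI[of _ "[:[:0, 1:]:]"]) simp
next
  case pf3_y
  show ?case by (rule exI[of _ "[:0, 1:]"]) simp
next
  case pf3_z
  show ?case by (rule exI[of _ W]) (simp add: w)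
next
  case (pf3_add f g)
  then obtain Q1 Q2
    where "\<forall>s t. f (s, t, w s t) = peval2 Q1 s t" "\<forall>s t. g (s, t, w s t) = peval2 Q2 s t"
    by blast
  then show ?case by (intro exI[of _ "Q1 + Q2"]) simp
next
  case (pf3_mul f g)
  then obtain Q1 Q2
    where "\<forall>s t. f (s, t, w s t) = peval2 Q1 s t" "\<forall>s t. g (s, t, w s t) = peval2 Q2 s t"
    by blast
  then show ?case by (intro exI[of _ "Q1 * Q2"]) simp
qed

definition graph_over ::
    "complex poly poly \<Rightarrow> (complex \<Rightarrow> complex \<Rightarrow> complex) \<Rightarrow> (complex \<times> complex \<times> complex) set"
  where
  "graph_over P w = {(s, t, z). peval2 P s t = 0 \<and> z = w s t}"

lemma inj_on_graph_over: "inj_on (\<lambda>(s, t, z). (s, t)) (graph_over P w)"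
  by (auto simp: inj_on_def graph_over_def)

lemma image_graph_over: "(\<lambda>(s, t, z). (s, t)) ` graph_over P w = {(s, t). peval2 P s t = 0}"
  by (auto simp: graph_over_def image_iff)

lemma zclosed3_graph_over:
  assumes "\<And>s t. w s t = peval2 W s t"
  shows "zclosed3 (graph_over P w)"
  unfolding zclosed3_def
proof (intro exI conjI)
  let ?F = "{\<lambda>p. peval2 P (fst p) (fst (snd p)),
            \<lambda>p. snd (snd p) - peval2 W (fst p) (fst (snd p))}"
  show "\<forall>f\<in>?F. pf3 f" by (simp add: pf3_peval2 pf3_diff pf3_snd_snd)
  show "graph_over P w = {p. \<forall>f\<in>?F. f p = 0}" by (auto simp: graph_over_def assms)
qed

lemma zirr3_graph_over:
  assumes prime: "prime_elem P"
    and ideal: "\<And>h. (\<And>s t. peval2 P s t = 0 \<Longrightarrow> peval2 h s t = 0) \<Longrightarrow> P dvd h"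
    and w: "\<And>s t. w s t = peval2 W s t"
    and nonempty: "graph_over P w \<noteq> {}"
  shows "zirr3 (graph_over P w)"
  unfolding zirr3_def
proof (intro conjI allI impI)
  show "graph_over P w \<noteq> {}" by (rule nonempty)
  show "zclosed3 (graph_over P w)" using w by (rule zclosed3_graph_over)
  have vanishes_on_graph: "\<forall>p\<in>graph_over P w. f p = 0"
    if "pf3 f" "P dvd Q" "\<forall>s t. f (s, t, w s t) = peval2 Q s t" for f Q
    using that by (auto simp: graph_over_def elim!: dvdE)
  fix A B assume "zclosed3 A" "zclosed3 B" and cover: "graph_over P w \<subseteq> A \<union> B"
  then obtain FA FB where FA: "\<forall>f\<in>FA. pf3 f" "A = {p. \<forall>f\<in>FA. f p = 0}"
    and FB: "\<forall>f\<in>FB. pf3 f" "B = {p. \<forall>f\<in>FB. f p = 0}"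
    unfolding zclosed3_def by blast
  show "graph_over P w \<subseteq> A \<or> graph_over P w \<subseteq> B"
  proof (rule ccontr)
    assume "\<not> ?thesis"
    then obtain f g where f: "f \<in> FA" "\<exists>p\<in>graph_over P w. f p \<noteq> 0"
      and g: "g \<in> FB" "\<exists>p\<in>graph_over P w. g p \<noteq> 0"
      using FA(2) FB(2) by blast
    obtain Qf Qg where Qf: "\<forall>s t. f (s, t, w s t) = peval2 Qf s t"
      and Qg: "\<forall>s t. g (s, t, w s t) = peval2 Qg s t"
      using pf3_on_poly_graph[OF _ w] f(1) g(1) FA(1) FB(1) by meson
    have "peval2 (Qf * Qg) s t = 0" if "peval2 P s t = 0" for s t
    proof -
      have "(s, t, w s t) \<in> A \<union> B" using cover that by (auto simp: graph_over_def)
      then have "f (s, t, w s t) = 0 \<or> g (s, t, w s t) = 0" using f(1) g(1) FA(2) FB(2) by blast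
      then show ?thesis using Qf Qg by simp
    qed
    then have "P dvd Qf * Qg" by (rule ideal)
    then have "P dvd Qf \<or> P dvd Qg" using prime prime_elem_dvd_mult_iff by blast
    moreover have "pf3 f" "pf3 g" using f(1) g(1) FA(1) FB(1) by blast+
    ultimately show False
      using vanishes_on_graph[OF _ _ Qf] vanishes_on_graph[OF _ _ Qg] f(2) g(2) by blast
  qed
qed

lemma zirr3_subset_union:
  "zirr3 Z \<Longrightarrow> zclosed3 A \<Longrightarrow> zclosed3 B \<Longrightarrow> Z \<subseteq> A \<union> B \<Longrightarrow> Z \<subseteq> A \<or> Z \<subseteq> B"
  unfolding zirr3_def by blast

lemma irr_comp3_of_closed_cover:
  assumes X: "X = R \<union> Y" and R: "zclosed3 R" and Y: "zirr3 Y" and "\<not> Y \<subseteq> R"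
  shows "irr_comp3 X Y"
  unfolding irr_comp3_def
proof (intro conjI allI impI)
  show "Y \<subseteq> X" "zirr3 Y" using X Y by auto
  fix Z assume "Z \<subseteq> X" "zirr3 Z" "Y \<subseteq> Z"
  moreover have "zclosed3 Y" using Y by (simp add: zirr3_def)
  ultimately have "Z \<subseteq> R \<or> Z \<subseteq> Y" using X R zirr3_subset_union by blast
  then show "Z = Y" using \<open>Y \<subseteq> Z\<close> \<open>\<not> Y \<subseteq> R\<close> by blast
qed

lemma irr_comp3_of_closed_cover_unique:
  assumes X: "X = R \<union> Y" and R: "zclosed3 R" and Y: "zirr3 Y"
    and Z: "irr_comp3 X Z" and "\<not> Z \<subseteq> R"
  shows "Z = Y"
proof -
  have "Z \<subseteq> R \<union> Y" "zirr3 Z" using X Z by (auto simp: irr_comp3_def)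
  moreover have "zclosed3 Y" using Y by (simp add: zirr3_def)
  ultimately have "Z \<subseteq> Y" using R \<open>\<not> Z \<subseteq> R\<close> zirr3_subset_union by blast
  then show "Z = Y" using Z X Y by (auto simp: irr_comp3_def)
qed

section \<open>Invariant lines of pairs of matrices\<close>

lemma m2inv_eq_adjugate: "m2det M = 1 \<Longrightarrow> m2inv M = (case M of (a, b, c, d) \<Rightarrow> (d, -b, -c, a))"
  by (cases M) (simp add: m2inv_def m2det_def)

definition vscale :: "complex \<Rightarrow> complex \<times> complex \<Rightarrow> complex \<times> complex" where
  "vscale c v = (c * fst v, c * snd v)"

lemma m2app_m2mul: "m2app (m2mul M N) v = m2app M (m2app N v)"
  by (cases M, cases N, cases v) (simp add: m2app_def m2mul_def algebra_simps)

lemma m2app_m2id: "m2app m2id v = v"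
  by (cases v) (simp add: m2app_def m2id_def)

lemma m2app_vscale: "m2app M (vscale c v) = vscale c (m2app M v)"
  by (cases M, cases v) (simp add: m2app_def vscale_def algebra_simps)

lemma vscale_vscale: "vscale a (vscale b v) = vscale (a * b) v"
  by (simp add: vscale_def)

lemma m2det_m2mul: "m2det (m2mul M N) = m2det M * m2det N"
  by (cases M, cases N) (simp add: m2det_def m2mul_def algebra_simps)

lemma m2det_m2inv: "m2det M = 1 \<Longrightarrow> m2det (m2inv M) = 1"
  by (cases M) (simp add: m2det_def m2inv_def algebra_simps)

lemma m2tr_m2inv: "m2det M = 1 \<Longrightarrow> m2tr (m2inv M) = m2tr M"
  by (cases M) (simp add: m2inv_eq_adjugate m2tr_def add.commute)

lemma m2inv_eigenvector:
  assumes "m2det M = 1" and "v \<noteq> (0, 0)" and "m2app M v = vscale c v"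
  shows "c \<noteq> 0" and "m2app (m2inv M) v = vscale (1 / c) v"
proof -
  obtain a b c' d where M: "M = (a, b, c', d)" by (cases M) auto
  obtain x y where v: "v = (x, y)" by (cases v) auto
  have det: "a*d - b*c' = 1" and eig: "a*x + b*y = c*x" "c'*x + d*y = c*y"
    using assms(1,3) by (simp_all add: M v m2det_def m2app_def vscale_def)
  then have adj: "c * (d*x - b*y) = x" "c * (- c'*x + a*y) = y" by algebra+
  then show "c \<noteq> 0" using assms(2) v by auto
  then have "(d*x - b*y, - c'*x + a*y) = (x / c, y / c)"
    using adj by (simp add: eq_divide_eq mult.commute)
  then show "m2app (m2inv M) v = vscale (1 / c) v"
    using assms(1) by (simp add: m2inv_eq_adjugate M v m2app_def vscale_def)
qed

lemma m2prod_eigenvector: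
  "list_all2 (\<lambda>M c. m2app M v = vscale c v) Ms cs \<Longrightarrow> m2app (m2prod Ms) v = vscale (prod_list cs) v"
proof (induct Ms arbitrary: cs)
  case Nil
  then show ?case by (simp add: m2prod_def m2app_m2id vscale_def)
next
  case (Cons M Ms)
  then obtain c cs' where "cs = c # cs'" "m2app M v = vscale c v"
    and "list_all2 (\<lambda>M c. m2app M v = vscale c v) Ms cs'"
    by (cases cs) auto
  with Cons.hyps show ?case
    by (simp add: m2prod_def m2app_m2mul m2app_vscale vscale_vscale mult.commute)
qed

lemma m2_has_eigenvector: "\<exists>v c. v \<noteq> (0, 0) \<and> m2app M v = vscale c v"
proof -
  obtain e f g h where M: "M = (e, f, g, h)" by (cases M) auto
  show ?thesis
  proof (cases "f = 0")
    case True
    then have "m2app M (0, 1) = vscale h (0, 1)" by (simp add: M m2app_def vscale_def)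
    then show ?thesis by (intro exI[of _ "(0, 1)"]) auto
  next
    case False
    define r where "r = csqrt ((e + h)^2 - 4 * (e*h - f*g))"
    define lam where "lam = (e + h + r) / 2"
    have "r^2 = (e + h)^2 - 4 * (e*h - f*g)" "2 * lam = e + h + r"
      by (simp_all add: r_def lam_def)
    then have "lam^2 - (e + h) * lam + (e*h - f*g) = 0" by algebra
    then have "g*f + h*(lam - e) = lam * (lam - e)" by algebra
    then have "m2app M (f, lam - e) = vscale lam (f, lam - e)"
      by (simp add: M m2app_def vscale_def algebra_simps)
    with False show ?thesis by (intro exI[of _ "(f, lam - e)"]) auto
  qed
qed

lemma not_irred_rep_iff_common_eigenvector:
  assumes dL: "m2det L = 1" and dB: "m2det B = 1"
  shows "\<not> irred_rep L B \<longleftrightarrow>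
    (\<exists>v c1 c2. v \<noteq> (0, 0) \<and> m2app L v = vscale c1 v \<and> m2app B v = vscale c2 v)"
proof
  assume "\<not> irred_rep L B"
  then show "\<exists>v c1 c2. v \<noteq> (0, 0) \<and> m2app L v = vscale c1 v \<and> m2app B v = vscale c2 v"
    unfolding irred_rep_def vscale_def using rep_image.ri_L rep_image.ri_B by blast
next
  assume "\<exists>v c1 c2. v \<noteq> (0, 0) \<and> m2app L v = vscale c1 v \<and> m2app B v = vscale c2 v"
  then obtain v c1 c2 where v: "v \<noteq> (0, 0)" and "m2app L v = vscale c1 v" "m2app B v = vscale c2 v"
    by blast
  have "m2det M = 1 \<and> (\<exists>c. m2app M v = vscale c v)" if "M \<in> rep_image L B" for M
    using that
  proof (induct rule: rep_image.induct)
    case ri_id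
    have "m2app m2id v = vscale 1 v" by (simp add: m2app_m2id vscale_def)
    then show ?case by (auto simp: m2det_def m2id_def)
  next
    case (ri_mul M N)
    then show ?case by (metis m2app_m2mul m2app_vscale vscale_vscale m2det_m2mul mult_1)
  next
    case (ri_inv M)
    then show ?case using m2inv_eigenvector(2)[OF _ v] m2det_m2inv by blast
  qed (use dL dB \<open>m2app L v = vscale c1 v\<close> \<open>m2app B v = vscale c2 v\<close> in blast)+
  then show "\<not> irred_rep L B" unfolding irred_rep_def vscale_def using v by blast
qed

lemma eigenvalue_1_imp_trace_2:
  assumes "m2det M = 1" and "v \<noteq> (0, 0)" and "m2app M v = v"
  shows "m2tr M = 2"
proof -
  obtain a b c d where M: "M = (a, b, c, d)" by (cases M) auto
  obtain x y where v: "v = (x, y)" by (cases v) auto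
  have "a*d - b*c = 1" "a*x + b*y = x" "c*x + d*y = y"
    using assms(1,3) by (simp_all add: M v m2det_def m2app_def)
  then have "(2 - (a + d)) * x = 0" "(2 - (a + d)) * y = 0" by algebra+
  then show ?thesis using assms(2) by (auto simp: M v m2tr_def)
qed

section \<open>The character variety of m137\<close>

definition lb_trace :: "complex \<Rightarrow> complex \<Rightarrow> complex" where
  "lb_trace s t = t - t * (s - 2) * ((s + 1) * t^2 - (s + 2))"

lemma lb_trace_eq_peval2: "lb_trace s t = peval2 [:0, [:-3, 0, 1:], 0, [:2, 1, -1:]:] s t"
  by (simp add: lb_trace_def algebra_simps power2_eq_square power3_eq_cube)

definition m137_comp :: "(complex \<times> complex \<times> complex) set" where
  "m137_comp = graph_over m137_poly lb_trace"

lemma mem_m137_comp: "(s, t, z) \<in> m137_comp \<longleftrightarrow> m137_eval s t = 0 \<and> z = lb_trace s t"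
  by (simp add: m137_comp_def graph_over_def peval2_m137_poly)

lemma m137_comp_nonempty: "m137_comp \<noteq> {}"
proof -
  define t where "t = (1 + \<i>) / 2"
  have "t^2 = \<i> / 2" unfolding t_def by (simp add: power2_eq_square field_simps)
  have "t^4 = t^2 * t^2" by (simp add: power4_eq_xxxx power2_eq_square)
  also have "\<dots> = - 1 / 4" unfolding \<open>t^2 = \<i> / 2\<close> by simp
  finally have "t^4 = - 1 / 4" .
  then have "(-2, t, lb_trace (-2) t) \<in> m137_comp" by (simp add: mem_m137_comp m137_eval_def)
  then show ?thesis by blast
qed

lemma zirr3_m137_comp: "zirr3 m137_comp"
  unfolding m137_comp_def
proof (rule zirr3_graph_over)
  show "prime_elem m137_poly"
    using irreducible_m137_poly prime_elem_iff_irreducible by blast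
  show "m137_poly dvd h" if "\<And>s t. peval2 m137_poly s t = 0 \<Longrightarrow> peval2 h s t = 0" for h
    using that by (rule m137_poly_dvd_if_vanishing)
  show "graph_over m137_poly lb_trace \<noteq> {}"
    using m137_comp_nonempty by (simp add: m137_comp_def)
qed (rule lb_trace_eq_peval2)

definition red_line :: "(complex \<times> complex \<times> complex) set" where
  "red_line = {(s, t, z). s = 2 \<and> z = t}"

lemma zclosed3_red_line: "zclosed3 red_line"
  unfolding zclosed3_def
proof (intro exI conjI)
  let ?F = "{\<lambda>p. fst p - 2, \<lambda>p. snd (snd p) - fst (snd p)}"
  show "\<forall>f\<in>?F. pf3 f" by (simp add: pf3_diff pf3_fst pf3_fst_snd pf3_snd_snd pf3_const)
  show "red_line = {p. \<forall>f\<in>?F. f p = 0}" by (auto simp: red_line_def)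
qed

(* The left-hand sides are tr(W X) - tr(V X) for X = 1, L, B, LB in Fricke coordinates,
   where W = V is the defining relation. *)
lemma relator_traces:
  assumes "is_rep L B"
  defines "x \<equiv> m2tr L" and "y \<equiv> m2tr B" and "z \<equiv> m2tr (m2mul L B)"
  shows "x^2*y*z - x^2*y^2 + x*y^3*z - x*y^2*z^2 + x - y^4 + y^3*z - y^2*z^2 + 4*y^2 + y*z^3
           - 4*y*z - 2 = 0" (is "?R1 = 0")
    and "x^3*y*z - x^3*y^2 + x^2*y^3*z - x^2*y^2*z^2 + x^2 - x*y^4 + x*y^3*z - x*y^2*z^2
           + 4*x*y^2 + x*y*z^3 - 5*x*y*z - x + y^2 + z^2 - 2 = 0" (is "?R2 = 0")
    and "x^2*y - x^2*y^3 + x*y^4*z - x*y^2*z + x*y - y^5 - y^3*z^2 + 5*y^3 + y*z^2 - 5*y - z = 0"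
      (is "?R3 = 0")
    and "x^2*y - x^2*y^2*z + x*y^3*z^2 - x*y^2*z - y^4*z + y^3 - y^2*z^3 + 4*y^2*z + y*z^2
           - 3*y - z = 0" (is "?R4 = 0")
proof -
  obtain a b c d where L: "L = (a, b, c, d)" by (cases L) auto
  obtain e f g h where B: "B = (e, f, g, h)" by (cases B) auto
  have det: "a*d - b*c = 1" "e*h - f*g = 1"
    using assms(1) by (simp_all add: is_rep_def m2det_def L B)
  have inv: "m2inv L = (d, -b, -c, a)" "m2inv B = (h, -f, -g, e)"
    using det by (simp_all add: m2inv_def m2det_def L B)
  define W where "W = m2prod [(h,-f,-g,e), (d,-b,-c,a), (h,-f,-g,e), (d,-b,-c,a), B, B, L]"
  define V where "V = m2prod [L, (h,-f,-g,e), (h,-f,-g,e), (d,-b,-c,a), B, B]"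
  have "W = V" using assms(1) inv by (simp add: is_rep_def W_def V_def)
  have xyz: "x = a + d" "y = e + h" "z = a*e + b*g + c*f + d*h"
    by (simp_all add: x_def y_def z_def L B m2tr_def m2mul_def)
  note expand = W_def V_def L B xyz m2tr_def m2prod_def m2mul_def m2id_def
  have "?R1 = m2tr W - m2tr V"
    using det unfolding expand by simp algebra
  moreover have "?R2 = m2tr (m2mul W L) - m2tr (m2mul V L)"
    using det unfolding expand by simp algebra
  moreover have "?R3 = m2tr (m2mul W B) - m2tr (m2mul V B)"
    using det unfolding expand by simp algebra
  moreover have "?R4 = m2tr (m2mul W (m2mul L B)) - m2tr (m2mul V (m2mul L B))"
    using det unfolding expand by simp algebra
  ultimately show "?R1 = 0" "?R2 = 0" "?R3 = 0" "?R4 = 0"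
    unfolding \<open>W = V\<close> by simp_all
qed

lemma rep_trace_relations:
  assumes "is_rep L B"
  shows "m2tr (m2mul L B) = lb_trace (m2tr L) (m2tr B)"
    and "(m2tr L - 2) * m137_eval (m2tr L) (m2tr B) = 0"
  using relator_traces[OF assms] unfolding lb_trace_def m137_eval_def by algebra+

lemma red_line_subset_charvar: "red_line \<subseteq> charvar"
proof
  fix p assume "p \<in> red_line"
  then obtain t where p: "p = (2, t, t)" by (auto simp: red_line_def)
  let ?B = "(t, -1, 1, 0) :: m2"
  have "is_rep m2id ?B"
    unfolding is_rep_def m2prod_def m2mul_def m2id_def m2inv_def m2det_def by simp
  moreover have "char m2id ?B = p" by (simp add: p char_def m2tr_def m2mul_def m2id_def)
  ultimately show "p \<in> charvar" unfolding charvar_def by blast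
qed

lemma m137_normal_form_relation:
  fixes s t f g :: complex
  assumes "m137_eval s t = 0" and "f * g = -1" and "f - g = lb_trace s t"
  shows "m2prod [(t,-f,-g,0), (0,1,-1,s), (t,-f,-g,0), (0,1,-1,s), (0,f,g,t), (0,f,g,t), (s,-1,1,0)]
       = m2prod [(s,-1,1,0), (t,-f,-g,0), (t,-f,-g,0), (0,1,-1,s), (0,f,g,t), (0,f,g,t)]"
  using assms unfolding m137_eval_def lb_trace_def m2prod_def m2mul_def m2id_def
  by (simp add: algebra_simps) algebra

lemma m137_comp_subset_charvar: "m137_comp \<subseteq> charvar"
proof
  fix p assume "p \<in> m137_comp"
  then obtain s t where p: "p = (s, t, lb_trace s t)" and curve: "m137_eval s t = 0"
    by (auto simp: m137_comp_def graph_over_def peval2_m137_poly)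
  define w where "w = lb_trace s t"
  \<comment> \<open>for L = [[s,-1],[1,0]] and B = [[0,f],[g,t]]: det B = -fg and tr(LB) = f - g\<close>
  define f where "f = (w + csqrt (w^2 - 4)) / 2"
  define g where "g = f - w"
  have "f * g = -1"
    using power2_csqrt[of "w^2 - 4"] unfolding g_def f_def
    by (simp add: field_simps power2_eq_square)
  let ?L = "(s, -1, 1, 0) :: m2" and ?B = "(0, f, g, t) :: m2"
  have "m2det ?L = 1" "m2det ?B = 1" using \<open>f * g = -1\<close> by (simp_all add: m2det_def)
  then have "m2inv ?L = (0, 1, -1, s)" "m2inv ?B = (t, -f, -g, 0)"
    by (simp_all add: m2inv_eq_adjugate)
  then have "is_rep ?L ?B"
    using \<open>m2det ?L = 1\<close> \<open>m2det ?B = 1\<close> m137_normal_form_relation[OF curve \<open>f * g = -1\<close>]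
    by (simp add: is_rep_def g_def w_def)
  moreover have "char ?L ?B = p" by (simp add: p char_def m2tr_def m2mul_def w_def[symmetric] g_def)
  ultimately show "p \<in> charvar" unfolding charvar_def by blast
qed

lemma charvar_eq: "charvar = red_line \<union> m137_comp"
proof
  show "charvar \<subseteq> red_line \<union> m137_comp"
  proof
    fix p assume "p \<in> charvar"
    then obtain L B where "is_rep L B" and p: "p = char L B" by (auto simp: charvar_def)
    note rel = rep_trace_relations[OF \<open>is_rep L B\<close>]
    show "p \<in> red_line \<union> m137_comp"
    proof (cases "m2tr L = 2")
      case True
      then show ?thesis using rel(1) by (simp add: p char_def red_line_def lb_trace_def)
    next
      case False
      then show ?thesis using rel by (simp add: p char_def mem_m137_comp)
    qed
  qed
  show "red_line \<union> m137_comp \<subseteq> charvar"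
    using red_line_subset_charvar m137_comp_subset_charvar by blast
qed

lemma m137_eval_at_2: "m137_eval 2 t = -1"
  by (simp add: m137_eval_def)

lemma red_line_disjoint_m137_comp: "red_line \<inter> m137_comp = {}"
  by (auto simp: red_line_def mem_m137_comp m137_eval_at_2)

lemma reducible_rep_trace_L:
  assumes rep: "is_rep L B" and "\<not> irred_rep L B"
  shows "m2tr L = 2"
proof -
  have dL: "m2det L = 1" and dB: "m2det B = 1" using rep by (simp_all add: is_rep_def)
  then obtain v c1 c2 where v: "v \<noteq> (0, 0)"
    and L: "m2app L v = vscale c1 v" and B: "m2app B v = vscale c2 v"
    using assms(2) not_irred_rep_iff_common_eigenvector by blast
  note Li = m2inv_eigenvector[OF dL v L] and Bi = m2inv_eigenvector[OF dB v B]
  have "m2app (m2prod [m2inv B, m2inv L, m2inv B, m2inv L, B, B, L]) v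
      = vscale (prod_list [1/c2, 1/c1, 1/c2, 1/c1, c2, c2, c1]) v"
    by (rule m2prod_eigenvector) (simp add: L B Li Bi)
  moreover have "m2app (m2prod [L, m2inv B, m2inv B, m2inv L, B, B]) v
      = vscale (prod_list [c1, 1/c2, 1/c2, 1/c1, c2, c2]) v"
    by (rule m2prod_eigenvector) (simp add: L B Li Bi)
  moreover have "prod_list [1/c2, 1/c1, 1/c2, 1/c1, c2, c2, c1] = 1 / c1"
    and "prod_list [c1, 1/c2, 1/c2, 1/c1, c2, c2] = 1"
    using Li(1) Bi(1) by (simp_all add: field_simps)
  ultimately have "vscale (1 / c1) v = vscale 1 v"
    using rep by (simp add: is_rep_def)
  then have "c1 = 1" using v Li(1) by (cases v) (auto simp: vscale_def field_simps)
  then show ?thesis using eigenvalue_1_imp_trace_2[OF dL v] L by (simp add: vscale_def)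
qed

(* L = 1 + N with N nilpotent, and tr(LB) = tr B says tr(NB) = 0, i.e. B preserves ker N. *)
lemma reducible_if_trace_L_2:
  assumes dL: "m2det L = 1" and dB: "m2det B = 1"
    and tL: "m2tr L = 2" and tLB: "m2tr (m2mul L B) = m2tr B"
  shows "\<not> irred_rep L B"
proof -
  obtain a b c d where L: "L = (a, b, c, d)" by (cases L) auto
  obtain e f g h where B: "B = (e, f, g, h)" by (cases B) auto
  have det: "a*d - b*c = 1" "e*h - f*g = 1" and tr: "a + d = 2" "a*e + b*g + c*f + d*h = e + h"
    using assms by (simp_all add: L B m2det_def m2tr_def m2mul_def add.assoc)
  have "\<exists>v c1 c2. v \<noteq> (0, 0) \<and> m2app L v = vscale c1 v \<and> m2app B v = vscale c2 v"
  proof (cases "b = 0")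
    case False
    define c2 where "c2 = (e*b + f*(1 - a)) / b"
    have "c*b + d*(1 - a) = 1 - a" "b*(g*b + h*(1 - a)) = (e*b + f*(1 - a))*(1 - a)"
      using det tr by algebra+
    then have "m2app L (b, 1 - a) = vscale 1 (b, 1 - a)" "m2app B (b, 1 - a) = vscale c2 (b, 1 - a)"
      using False by (simp_all add: L B c2_def m2app_def vscale_def field_simps)
    with False show ?thesis by (intro exI[of _ "(b, 1 - a)"]) auto
  next
    case True
    then have "a = 1" "d = 1" using det tr by algebra+
    show ?thesis
    proof (cases "c = 0")
      case False
      then have "f = 0" using tr \<open>a = 1\<close> \<open>d = 1\<close> True by simp
      then have "m2app L (0, 1) = vscale 1 (0, 1)" "m2app B (0, 1) = vscale h (0, 1)"
        using True \<open>d = 1\<close> by (simp_all add: L B m2app_def vscale_def)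
      then show ?thesis by (intro exI[of _ "(0, 1)"]) auto
    next
      case c0: True
      obtain v c2 where "v \<noteq> (0, 0)" "m2app B v = vscale c2 v" using m2_has_eigenvector by blast
      moreover have "m2app L v = vscale 1 v"
        using True c0 \<open>a = 1\<close> \<open>d = 1\<close> by (cases v) (simp add: L m2app_def vscale_def)
      ultimately show ?thesis by blast
    qed
  qed
  then show ?thesis using not_irred_rep_iff_common_eigenvector[OF dL dB] by blast
qed

lemma irr_comp3_with_irred_char_iff:
  "irr_comp3 charvar Y \<and> (\<exists>L B. is_rep L B \<and> irred_rep L B \<and> char L B \<in> Y) \<longleftrightarrow> Y = m137_comp"
proof
  have reducible_on_red_line: "\<not> irred_rep L B" if "is_rep L B" "char L B \<in> red_line" for L B
    using that by (intro reducible_if_trace_L_2) (auto simp: is_rep_def char_def red_line_def)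
  assume "irr_comp3 charvar Y \<and> (\<exists>L B. is_rep L B \<and> irred_rep L B \<and> char L B \<in> Y)"
  then have "irr_comp3 charvar Y" and "\<not> Y \<subseteq> red_line" using reducible_on_red_line by blast+
  then show "Y = m137_comp"
    using irr_comp3_of_closed_cover_unique[OF charvar_eq zclosed3_red_line zirr3_m137_comp] by blast
next
  assume Y: "Y = m137_comp"
  obtain p where "p \<in> m137_comp" using m137_comp_nonempty by blast
  then have "\<not> m137_comp \<subseteq> red_line" using red_line_disjoint_m137_comp by blast
  then have "irr_comp3 charvar m137_comp"
    by (rule irr_comp3_of_closed_cover[OF charvar_eq zclosed3_red_line zirr3_m137_comp])
  moreover obtain L B where "is_rep L B" "char L B = p"
    using \<open>p \<in> m137_comp\<close> m137_comp_subset_charvar by (auto simp: charvar_def)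
  moreover have "m2tr L \<noteq> 2"
    using \<open>char L B = p\<close> \<open>p \<in> m137_comp\<close> by (auto simp: char_def mem_m137_comp m137_eval_at_2)
  then have "irred_rep L B" using reducible_rep_trace_L \<open>is_rep L B\<close> by blast
  ultimately show "irr_comp3 charvar Y \<and> (\<exists>L B. is_rep L B \<and> irred_rep L B \<and> char L B \<in> Y)"
    using Y \<open>p \<in> m137_comp\<close> by blast
qed

lemma lb_trace_on_curve:
  assumes "m137_eval s t = 0"
  shows "t * (s + 1) \<noteq> 0" and "lb_trace s t = t - 1 / (t * (s + 1))"
proof -
  show "t * (s + 1) \<noteq> 0"
  proof
    assume "t * (s + 1) = 0"
    then have "m137_eval s t = -1" unfolding m137_eval_def by algebra
    with assms show False by simp
  qed
  moreover have "(t - lb_trace s t) * (t * (s + 1)) = 1"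
    using assms unfolding m137_eval_def lb_trace_def by algebra
  ultimately have "t - lb_trace s t = 1 / (t * (s + 1))"
    by (simp add: eq_divide_eq)
  then show "lb_trace s t = t - 1 / (t * (s + 1))" by (simp add: eq_diff_eq diff_eq_eq add.commute)
qed

lemma trace_LB_on_m137_comp:
  assumes "is_rep L B" and "char L B \<in> m137_comp"
  shows "let s = m2tr L; t = m2tr B in
    t * (s + 1) \<noteq> 0 \<and>
    m2tr (m2mul L B) = t - 1 / (t * (s + 1)) \<and>
    m2tr (m2inv (m2mul L B)) = t - 1 / (t * (s + 1))"
proof -
  have curve: "m137_eval (m2tr L) (m2tr B) = 0"
    and LB: "m2tr (m2mul L B) = lb_trace (m2tr L) (m2tr B)"
    using assms(2) by (simp_all add: char_def mem_m137_comp)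
  have "m2det (m2mul L B) = 1" using assms(1) by (simp add: is_rep_def m2det_m2mul)
  then show ?thesis using lb_trace_on_curve[OF curve] LB by (simp add: m2tr_m2inv Let_def)
qed

theorem lemma1:
  shows "m137_poly = m137_poly_alt \<and> irreducible m137_poly \<and>
    (\<exists>!X0. irr_comp3 charvar X0 \<and> (\<exists>L B. is_rep L B \<and> irred_rep L B \<and> char L B \<in> X0)) \<and>
    (\<forall>X0. irr_comp3 charvar X0 \<and> (\<exists>L B. is_rep L B \<and> irred_rep L B \<and> char L B \<in> X0) \<longrightarrow>
       inj_on (\<lambda>(x, y, z). (x, y)) X0 \<and>
       (\<lambda>(x, y, z). (x, y)) ` X0 = {(s, t). peval2 m137_poly s t = 0} \<and>
       (\<forall>L B. is_rep L B \<and> char L B \<in> X0 \<longrightarrow>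
          (let s = m2tr L; t = m2tr B in
             t * (s + 1) \<noteq> 0 \<and>
             m2tr (m2mul L B) = t - 1 / (t * (s + 1)) \<and>
             m2tr (m2inv (m2mul L B)) = t - 1 / (t * (s + 1)))))"
  unfolding irr_comp3_with_irred_char_iff
  using m137_poly_eq_alt irreducible_m137_poly trace_LB_on_m137_comp
    inj_on_graph_over[of m137_poly lb_trace] image_graph_over[of m137_poly lb_trace]
  by (simp add: m137_comp_def)

end
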